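(* Let $G=(V,E)$ be a connected hypergraph and $\lambda\in\mathbb{C}$. Then $\prod_{A\in E}f_A^{(\lambda)}=f_V^{(\lambda)}$ if $G$ is a hypertree and $=0$ if $G$ is not a hypertree. More generally, for complex numbers $\{\lambda_A\}_{A\in E}$, $\prod_{A\in E}f_A^{(\lambda_A)}=f_V^{(\lambda_\star)}$ if $G$ is a hypertree and $=0$ otherwise, where $$\lambda_\star=\frac{\sum_{A\in E}(|A|-1)\lambda_A}{\sum_{A\in E}(|A|-1)}=\frac{\sum_{A\in E}(|A|-1)\lambda_A}{\big|\bigcup_{A\in E}A\big|-1}.$$
   Context: A hypergraph is a pair $G=(V,E)$ with $V$ finite and $E$ a set of subsets of $V$ each of cardinality at least 2. A walk is $(v_0,e_1,v_1,\ldots,e_k,v_k)$ with $v_{i-1},v_i\in e_i\in E$; $G$ is connected if any two vertices are joined by a walk. A cycle is a walk with $v_0,\ldots,v_{k-1}$ distinct, $v_k=v_0$, $e_1,\ldots,e_k$ distinct, $k\ge2$; a hypertree is a connected hypergraph without cycles. For each $i\in V$ let $\psi_i,\bar\psi_i$ be anticommuting generators of a Grassmann algebra over $\mathbb{C}$; $\tau_A=\prod_{i\in A}\bar\psi_i\psi_i$ ($\tau_\emptyset=1$); $f_A^{(\lambda)}=\lambda(1-|A|)\tau_A+\sum_{i\in A}\tau_{A\setminus\{i\}}-\sum_{i,j\in A,\ i\neq j}\bar\psi_i\psi_j\,\tau_{A\setminus\{i,j\}}$ (the factors commute, being even). *)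

theory Defs
  imports Complex_Main "HOL-Library.Product_Lexorder"
begin

definition hypergraph :: "'v set \<Rightarrow> 'v set set \<Rightarrow> bool" where
  "hypergraph V E \<longleftrightarrow> finite V \<and> (\<forall>A\<in>E. A \<subseteq> V \<and> 2 \<le> card A)"

text \<open>A walk (v_0,e_1,v_1,...,e_k,v_k) is given by the vertex list vs = [v_0,...,v_k]
  and the edge list es = [e_1,...,e_k].\<close>
definition hg_walk :: "'v set set \<Rightarrow> 'v list \<Rightarrow> 'v set list \<Rightarrow> bool" where
  "hg_walk E vs es \<longleftrightarrow> length vs = length es + 1 \<and>
     (\<forall>i < length es. es ! i \<in> E \<and> vs ! i \<in> es ! i \<and> vs ! (Suc i) \<in> es ! i)"

definition hg_connected :: "'v set \<Rightarrow> 'v set set \<Rightarrow> bool" where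
  "hg_connected V E \<longleftrightarrow> (\<forall>u\<in>V. \<forall>v\<in>V. \<exists>vs es. hg_walk E vs es \<and> hd vs = u \<and> last vs = v)"

definition hg_cycle :: "'v set set \<Rightarrow> 'v list \<Rightarrow> 'v set list \<Rightarrow> bool" where
  "hg_cycle E vs es \<longleftrightarrow> hg_walk E vs es \<and> 2 \<le> length es \<and>
     distinct (butlast vs) \<and> last vs = hd vs \<and> distinct es"

definition hypertree :: "'v set \<Rightarrow> 'v set set \<Rightarrow> bool" where
  "hypertree V E \<longleftrightarrow> hg_connected V E \<and> \<not> (\<exists>vs es. hg_cycle E vs es)"

text \<open>Elements of the Grassmann algebra generated by a linearly ordered set of generators
  are coefficient functions on finite sets of generators (monomials = increasing products).
  Generators are ('v \<times> bool): (i, False) is psibar_i and (i, True) is psi_i.\<close>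

type_synonym 'g grass = "'g set \<Rightarrow> complex"

definition inv_count :: "('g::linorder) set \<Rightarrow> 'g set \<Rightarrow> nat" where
  "inv_count T U = card {(t, u). t \<in> T \<and> u \<in> U \<and> u < t}"

definition gmul :: "('g::linorder) grass \<Rightarrow> 'g grass \<Rightarrow> 'g grass" where
  "gmul a b = (\<lambda>S. if finite S then
      (\<Sum>T\<in>Pow S. (-1) ^ inv_count T (S - T) * a T * b (S - T)) else 0)"

definition gone :: "'g grass" where
  "gone = (\<lambda>S. if S = {} then 1 else 0)"

definition gzero :: "'g grass" where
  "gzero = (\<lambda>S. 0)"

definition gadd :: "'g grass \<Rightarrow> 'g grass \<Rightarrow> 'g grass" where
  "gadd a b = (\<lambda>S. a S + b S)"

definition gdiff :: "'g grass \<Rightarrow> 'g grass \<Rightarrow> 'g grass" where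
  "gdiff a b = (\<lambda>S. a S - b S)"

definition gscal :: "complex \<Rightarrow> 'g grass \<Rightarrow> 'g grass" where
  "gscal c a = (\<lambda>S. c * a S)"

definition gsum :: "('i \<Rightarrow> 'g grass) \<Rightarrow> 'i set \<Rightarrow> 'g grass" where
  "gsum F I = (\<lambda>S. \<Sum>i\<in>I. F i S)"

definition ggen :: "'g \<Rightarrow> 'g grass" where
  "ggen g = (\<lambda>S. if S = {g} then 1 else 0)"

definition gprod_list :: "('g::linorder) grass list \<Rightarrow> 'g grass" where
  "gprod_list xs = foldr gmul xs gone"

definition psi :: "'v \<Rightarrow> ('v \<times> bool) grass" where
  "psi i = ggen (i, True)"

definition psibar :: "'v \<Rightarrow> ('v \<times> bool) grass" where
  "psibar i = ggen (i, False)"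

text \<open>tau_A = prod_{i in A} psibar_i psi_i (factors are even, hence commute; we take them
  in increasing order).\<close>
definition tau :: "('v::linorder) set \<Rightarrow> ('v \<times> bool) grass" where
  "tau A = gprod_list (map (\<lambda>i. gmul (psibar i) (psi i)) (sorted_list_of_set A))"

definition fA :: "complex \<Rightarrow> ('v::linorder) set \<Rightarrow> ('v \<times> bool) grass" where
  "fA lam A = gdiff
     (gadd (gscal (lam * (1 - of_nat (card A))) (tau A))
           (gsum (\<lambda>i. tau (A - {i})) A))
     (gsum (\<lambda>(i, j). gmul (gmul (psibar i) (psi j)) (tau (A - {i, j})))
           {(i, j). i \<in> A \<and> j \<in> A \<and> i \<noteq> j})"

definition lambda_star :: "'v set set \<Rightarrow> ('v set \<Rightarrow> complex) \<Rightarrow> complex" where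
  "lambda_star E lamA = (\<Sum>A\<in>E. (of_nat (card A) - 1) * lamA A) / (\<Sum>A\<in>E. of_nat (card A) - 1)"

end

(* The even elements E_ij = psibar_i psi_j generate a commutative ring in which
   E_ij E_kl = - E_il E_kj  and  E_ij E_il = E_ij E_kj = 0.  From these relations alone,
   f_A^(0) = prod_{j in A - {r}} (psibar_j - psibar_r)(psi_j - psi_r) for every r in A, and
   f_A^(lambda) = f_A^(0) + lambda (1 - |A|) tau_A.  Hence two such factors whose vertex sets meet
   in exactly one vertex multiply to the factor of the union, with the weights lambda (1 - |A|)
   added, while vertex sets sharing two vertices give 0 (a squared factor or a repeated diagonal
   element E_vv).  Order the edges of a connected hypergraph so that each meets the union of its
   predecessors: the product is f_V with the summed weight if every edge meets its predecessors in
   exactly one vertex, and 0 otherwise.  That condition is equivalent to the absence of cycles, and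
   then |V| - 1 = sum_A (|A| - 1), which turns the summed weight into lambda_star (1 - |V|). *)

theory Submission
  imports Defs
begin

section \<open>The Grassmann algebra as a ring\<close>

lemma inv_count_Un_left:
  assumes "finite T" "finite T'" "finite U" "T \<inter> T' = {}"
  shows "inv_count (T \<union> T') U = inv_count T U + inv_count T' U"
proof -
  have "{(t, u). t \<in> T \<union> T' \<and> u \<in> U \<and> u < t} =
        {(t, u). t \<in> T \<and> u \<in> U \<and> u < t} \<union> {(t, u). t \<in> T' \<and> u \<in> U \<and> u < t}" by auto
  moreover have "finite {(t, u). t \<in> T \<and> u \<in> U \<and> u < t}" "finite {(t, u). t \<in> T' \<and> u \<in> U \<and> u < t}"
    by (rule finite_subset[of _ "T \<times> U"] finite_subset[of _ "T' \<times> U"]; use assms in auto)+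
  ultimately show ?thesis unfolding inv_count_def
    by (subst card_Un_disjoint[symmetric]) (use assms in auto)
qed

lemma inv_count_Un_right:
  assumes "finite T" "finite U" "finite U'" "U \<inter> U' = {}"
  shows "inv_count T (U \<union> U') = inv_count T U + inv_count T U'"
proof -
  have "{(t, u). t \<in> T \<and> u \<in> U \<union> U' \<and> u < t} =
        {(t, u). t \<in> T \<and> u \<in> U \<and> u < t} \<union> {(t, u). t \<in> T \<and> u \<in> U' \<and> u < t}" by auto
  moreover have "finite {(t, u). t \<in> T \<and> u \<in> U \<and> u < t}" "finite {(t, u). t \<in> T \<and> u \<in> U' \<and> u < t}"
    by (rule finite_subset[of _ "T \<times> U"] finite_subset[of _ "T \<times> U'"]; use assms in auto)+
  ultimately show ?thesis unfolding inv_count_def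
    by (subst card_Un_disjoint[symmetric]) (use assms in auto)
qed

lemma inv_count_swap:
  assumes "finite T" "finite U" "T \<inter> U = {}"
  shows "inv_count T U + inv_count U T = card T * card U"
proof -
  let ?X = "{(t, u). t \<in> T \<and> u \<in> U \<and> u < t}"
  let ?Y = "{(t, u). t \<in> T \<and> u \<in> U \<and> t < u}"
  have "inv_count U T = card (prod.swap ` ?Y)"
    unfolding inv_count_def by (rule arg_cong[where f = card]) (auto simp: image_iff)
  also have "\<dots> = card ?Y" by (rule card_image) (simp add: inj_on_def)
  finally have Y: "inv_count U T = card ?Y" .
  have "?X \<union> ?Y = T \<times> U" using assms by (auto simp: neq_iff)
  moreover have "finite ?X" "finite ?Y"
    by (rule finite_subset[of _ "T \<times> U"]; use assms in auto)+
  then have "card (?X \<union> ?Y) = card ?X + card ?Y" by (intro card_Un_disjoint) auto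
  ultimately have "card ?X + card ?Y = card T * card U"
    by (simp add: card_cartesian_product)
  then show ?thesis unfolding Y by (simp add: inv_count_def)
qed

lemma inv_count_empty [simp]: "inv_count T {} = 0" "inv_count {} U = 0"
  by (simp_all add: inv_count_def)

lemma sum_Pow_Pow_reindex:
  assumes "finite S"
  shows "(\<Sum>T\<in>Pow S. \<Sum>R\<in>Pow T. F T R) = (\<Sum>R\<in>Pow S. \<Sum>Q\<in>Pow (S - R). F (R \<union> Q) R)"
proof -
  have "(\<Sum>T\<in>Pow S. \<Sum>R\<in>Pow T. F T R) = (\<Sum>(T, R)\<in>Sigma (Pow S) Pow. F T R)"
    by (rule sum.Sigma) (use assms in \<open>auto intro: finite_subset\<close>)
  also have "\<dots> = (\<Sum>(R, Q)\<in>Sigma (Pow S) (\<lambda>R. Pow (S - R)). F (R \<union> Q) R)"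
    by (rule sum.reindex_bij_witness[where i = "\<lambda>(R, Q). (R \<union> Q, R)" and j = "\<lambda>(T, R). (R, T - R)"])
      (auto simp: Un_absorb1 Un_absorb2)
  also have "\<dots> = (\<Sum>R\<in>Pow S. \<Sum>Q\<in>Pow (S - R). F (R \<union> Q) R)"
    by (rule sum.Sigma[symmetric]) (use assms in auto)
  finally show ?thesis .
qed

lemma gmul_infinite: "infinite S \<Longrightarrow> gmul a b S = 0"
  by (simp add: gmul_def)

lemma gmul_assoc_finite:
  assumes "finite S"
  shows "gmul (gmul a b) c S = gmul a (gmul b c) S"
proof -
  let ?s = "\<lambda>T U. (-1::complex) ^ inv_count T U"
  have "gmul (gmul a b) c S =
      (\<Sum>T\<in>Pow S. \<Sum>R\<in>Pow T. ?s T (S - T) * (?s R (T - R) * a R * b (T - R)) * c (S - T))"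
    using assms by (simp add: gmul_def sum_distrib_left sum_distrib_right finite_subset)
  also have "\<dots> = (\<Sum>R\<in>Pow S. \<Sum>Q\<in>Pow (S - R). ?s (R \<union> Q) (S - (R \<union> Q)) *
      (?s R ((R \<union> Q) - R) * a R * b ((R \<union> Q) - R)) * c (S - (R \<union> Q)))"
    by (rule sum_Pow_Pow_reindex[OF assms])
  also have "\<dots> = (\<Sum>R\<in>Pow S. \<Sum>Q\<in>Pow (S - R).
      ?s R (S - R) * a R * (?s Q (S - R - Q) * b Q * c (S - R - Q)))"
  proof (intro sum.cong refl)
    fix R Q assume R: "R \<in> Pow S" and Q: "Q \<in> Pow (S - R)"
    let ?W = "S - R - Q"
    have fin: "finite R" "finite Q" "finite ?W"
      using R Q assms by (auto intro: finite_subset)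
    have RQ: "(R \<union> Q) - R = Q" "S - (R \<union> Q) = ?W" using Q by auto
    \<comment> \<open>both sides count the inversions between the three blocks \<open>R\<close>, \<open>Q\<close>, \<open>?W\<close>\<close>
    have "inv_count R (Q \<union> ?W) = inv_count R Q + inv_count R ?W"
      using fin by (intro inv_count_Un_right) auto
    moreover have "Q \<union> ?W = S - R" using Q by auto
    ultimately have "inv_count R (S - R) = inv_count R Q + inv_count R ?W" by simp
    moreover have "inv_count (R \<union> Q) ?W = inv_count R ?W + inv_count Q ?W"
      using fin Q by (intro inv_count_Un_left) auto
    ultimately have "inv_count (R \<union> Q) ?W + inv_count R Q = inv_count R (S - R) + inv_count Q ?W"
      by simp
    then have "?s (R \<union> Q) (S - (R \<union> Q)) * ?s R ((R \<union> Q) - R) = ?s R (S - R) * ?s Q ?W"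
      unfolding RQ by (simp only: power_add[symmetric])
    then show "?s (R \<union> Q) (S - (R \<union> Q)) * (?s R ((R \<union> Q) - R) * a R * b ((R \<union> Q) - R)) *
        c (S - (R \<union> Q)) = ?s R (S - R) * a R * (?s Q ?W * b Q * c ?W)"
      unfolding RQ by (simp add: algebra_simps)
  qed
  also have "\<dots> = gmul a (gmul b c) S"
    using assms by (simp add: gmul_def sum_distrib_left finite_subset)
  finally show ?thesis .
qed

lemma gmul_assoc: "gmul (gmul a b) c = gmul a (gmul b c)"
proof
  fix S show "gmul (gmul a b) c S = gmul a (gmul b c) S"
    by (cases "finite S") (simp_all add: gmul_assoc_finite gmul_infinite)
qed

lemma gmul_gone_left:
  assumes "\<forall>S. infinite S \<longrightarrow> a S = 0"
  shows "gmul gone a = a"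
proof
  fix S
  show "gmul gone a S = a S"
  proof (cases "finite S")
    case True
    then have "gmul gone a S = (\<Sum>T\<in>Pow S. if T = {} then a S else 0)"
      unfolding gmul_def if_P[OF True] by (intro sum.cong) (auto simp: gone_def)
    then show ?thesis using True by simp
  qed (simp add: assms gmul_infinite)
qed

lemma gmul_gone_right:
  assumes "\<forall>S. infinite S \<longrightarrow> a S = 0"
  shows "gmul a gone = a"
proof
  fix S
  show "gmul a gone S = a S"
  proof (cases "finite S")
    case True
    then have "gmul a gone S = (\<Sum>T\<in>Pow S. if T = S then a S else 0)"
      unfolding gmul_def if_P[OF True] by (intro sum.cong) (auto simp: gone_def)
    then show ?thesis using True by simp
  qed (simp add: assms gmul_infinite)
qed

lemma gmul_gscal_left: "gmul (gscal c a) b = gscal c (gmul a b)"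
  by (simp add: gmul_def gscal_def sum_distrib_left mult_ac fun_eq_iff)

text \<open>The unit law needs the restriction to functions vanishing on infinite sets, where
  \<open>gmul\<close> is \<open>0\<close> by definition.\<close>
typedef 'g grassmann = "{a :: 'g grass. \<forall>S. infinite S \<longrightarrow> a S = 0}"
  by (rule exI[of _ "\<lambda>_. 0"]) auto

setup_lifting type_definition_grassmann

instantiation grassmann :: (linorder) ring_1
begin

lift_definition zero_grassmann :: "'a grassmann" is gzero by (simp add: gzero_def)
lift_definition one_grassmann :: "'a grassmann" is gone by (auto simp: gone_def)
lift_definition plus_grassmann :: "'a grassmann \<Rightarrow> 'a grassmann \<Rightarrow> 'a grassmann" is gadd
  by (simp add: gadd_def)
lift_definition minus_grassmann :: "'a grassmann \<Rightarrow> 'a grassmann \<Rightarrow> 'a grassmann" is gdiff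
  by (simp add: gdiff_def)
lift_definition uminus_grassmann :: "'a grassmann \<Rightarrow> 'a grassmann" is "\<lambda>a S. - a S"
  by simp
lift_definition times_grassmann :: "'a grassmann \<Rightarrow> 'a grassmann \<Rightarrow> 'a grassmann" is gmul
  by (simp add: gmul_infinite)

instance
proof
  fix a b c :: "'a grassmann"
  show "a * b * c = a * (b * c)"
    by transfer (rule gmul_assoc)
  show "1 * a = a"
    by transfer (rule gmul_gone_left)
  show "a * 1 = a"
    by transfer (rule gmul_gone_right)
  show "(a + b) * c = a * c + b * c"
    by transfer (simp add: fun_eq_iff gmul_def gadd_def sum.distrib distrib_left distrib_right)
  show "a * (b + c) = a * b + a * c"
    by transfer (simp add: fun_eq_iff gmul_def gadd_def sum.distrib distrib_left distrib_right)
  show "a + b + c = a + (b + c)"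
    by transfer (simp add: fun_eq_iff gadd_def)
  show "a + b = b + a"
    by transfer (simp add: fun_eq_iff gadd_def)
  show "0 + a = a"
    by transfer (simp add: fun_eq_iff gadd_def gzero_def)
  show "- a + a = 0"
    by transfer (simp add: fun_eq_iff gadd_def gzero_def)
  show "a - b = a + - b"
    by transfer (simp add: fun_eq_iff gadd_def gdiff_def)
  show "(0::'a grassmann) \<noteq> 1"
    by transfer (simp add: fun_eq_iff gzero_def gone_def)
qed

end

section \<open>The even subalgebra and the pairs $\bar\psi_i\psi_j$\<close>

definition has_parity :: "nat \<Rightarrow> 'g grass \<Rightarrow> bool" where
  "has_parity p a \<longleftrightarrow> (\<forall>T. finite T \<longrightarrow> card T mod 2 \<noteq> p \<longrightarrow> a T = 0)"

lemma has_parity_gmul: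
  assumes "has_parity p a" "has_parity q b"
  shows "has_parity ((p + q) mod 2) (gmul a b)"
  unfolding has_parity_def
proof (intro allI impI)
  fix S :: "'a set" assume S: "finite S" "card S mod 2 \<noteq> (p + q) mod 2"
  have summand_zero: "(-1) ^ inv_count T (S - T) * a T * b (S - T) = 0" if "T \<in> Pow S" for T
  proof -
    have fin: "finite T" "finite (S - T)" using that S by (auto intro: finite_subset)
    have "card S = card T + card (S - T)"
      using that fin card_Diff_subset[of T S] card_mono[OF S(1), of T] by auto
    then have "card T mod 2 \<noteq> p \<or> card (S - T) mod 2 \<noteq> q"
      using S(2) by (metis mod_add_eq)
    then show ?thesis using assms fin unfolding has_parity_def by auto
  qed
  show "gmul a b S = 0"
    unfolding gmul_def if_P[OF S(1)] by (rule sum.neutral) (use summand_zero in blast)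
qed

lemma gmul_commute_even:
  assumes "has_parity 0 a"
  shows "gmul a b = gmul b a"
proof
  fix S :: "'a set"
  show "gmul a b S = gmul b a S"
  proof (cases "finite S")
    case True
    have "gmul b a S = (\<Sum>T\<in>Pow S. (-1) ^ inv_count (S - T) T * b (S - T) * a T)"
      unfolding gmul_def if_P[OF True]
      by (rule sum.reindex_bij_witness[where i = "\<lambda>T. S - T" and j = "\<lambda>T. S - T"])
        (auto simp: double_diff)
    also have "\<dots> = (\<Sum>T\<in>Pow S. (-1) ^ inv_count T (S - T) * a T * b (S - T))"
    proof (intro sum.cong refl)
      fix T assume T: "T \<in> Pow S"
      have fin: "finite T" "finite (S - T)" using T True by (auto intro: finite_subset)
      show "(-1) ^ inv_count (S - T) T * b (S - T) * a T = (-1) ^ inv_count T (S - T) * a T * b (S - T)"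
      proof (cases "card T mod 2 = 0")
        case True
        have "inv_count T (S - T) + inv_count (S - T) T = card T * card (S - T)"
          using fin by (intro inv_count_swap) auto
        then have "even (inv_count T (S - T) + inv_count (S - T) T)" using True by auto
        then have "(-1::complex) ^ inv_count (S - T) T = (-1) ^ inv_count T (S - T)"
          by (metis even_add neg_one_even_power neg_one_odd_power)
        then show ?thesis by simp
      qed (use assms fin in \<open>simp add: has_parity_def\<close>)
    qed
    also have "\<dots> = gmul a b S" unfolding gmul_def using True by simp
    finally show ?thesis by simp
  qed (simp add: gmul_infinite)
qed

typedef ('g::linorder) even_grassmann = "{x :: 'g grassmann. has_parity 0 (Rep_grassmann x)}"
  by (rule exI[of _ 0]) (simp add: zero_grassmann.rep_eq has_parity_def gzero_def)

setup_lifting type_definition_even_grassmann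

instantiation even_grassmann :: (linorder) comm_ring_1
begin

lift_definition zero_even_grassmann :: "'a even_grassmann" is 0
  by (simp add: zero_grassmann.rep_eq has_parity_def gzero_def)
lift_definition one_even_grassmann :: "'a even_grassmann" is 1
  by (simp add: one_grassmann.rep_eq has_parity_def gone_def)
lift_definition plus_even_grassmann :: "'a even_grassmann \<Rightarrow> 'a even_grassmann \<Rightarrow> 'a even_grassmann"
  is "(+)" by (simp add: plus_grassmann.rep_eq has_parity_def gadd_def)
lift_definition minus_even_grassmann :: "'a even_grassmann \<Rightarrow> 'a even_grassmann \<Rightarrow> 'a even_grassmann"
  is "(-)" by (simp add: minus_grassmann.rep_eq has_parity_def gdiff_def)
lift_definition uminus_even_grassmann :: "'a even_grassmann \<Rightarrow> 'a even_grassmann"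
  is uminus by (simp add: uminus_grassmann.rep_eq has_parity_def)
lift_definition times_even_grassmann :: "'a even_grassmann \<Rightarrow> 'a even_grassmann \<Rightarrow> 'a even_grassmann"
  is "(*)" using has_parity_gmul[of 0 _ 0] by (simp add: times_grassmann.rep_eq)

instance
proof
  fix a b c :: "'a even_grassmann"
  show "a * b * c = a * (b * c)" by transfer (rule mult.assoc)
  show "a * b = b * a"
    by transfer (simp add: times_grassmann.rep_eq gmul_commute_even Rep_grassmann_inject[symmetric])
  show "1 * a = a" by transfer simp
  show "(a + b) * c = a * c + b * c" by transfer (rule distrib_right)
  show "a + b + c = a + (b + c)" by transfer (rule add.assoc)
  show "a + b = b + a" by transfer (rule add.commute)
  show "0 + a = a" by transfer simp
  show "- a + a = 0" by transfer simp
  show "a - b = a + - b" by transfer simp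
  show "(0::'a even_grassmann) \<noteq> 1" by transfer simp
qed

end

lemma inv_count_singletons: "inv_count {a} {b} = (if b < a then 1 else 0)"
proof -
  have "{(t, u). t \<in> {a} \<and> u \<in> {b} \<and> u < t} = (if b < a then {(a, b)} else {})" by auto
  then show ?thesis unfolding inv_count_def by simp
qed

lemma ggen_mul_finite:
  assumes "finite S"
  shows "gmul (ggen a) (ggen b) S = (if a \<noteq> b \<and> S = {a, b} then (if b < a then -1 else 1) else 0)"
proof -
  have "gmul (ggen a) (ggen b) S =
      (\<Sum>T\<in>Pow S. if T = {a} then (-1) ^ inv_count {a} (S - {a}) * ggen b (S - {a}) else 0)"
    unfolding gmul_def if_P[OF assms] by (intro sum.cong) (auto simp: ggen_def)
  also have "\<dots> = (if a \<in> S then (-1) ^ inv_count {a} (S - {a}) * ggen b (S - {a}) else 0)"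
    using assms by simp
  also have "\<dots> = (if a \<noteq> b \<and> S = {a, b} then (if b < a then -1 else 1) else 0)"
  proof (cases "a \<in> S \<and> S - {a} = {b}")
    case True
    then have "S - {a} = {b}" "a \<noteq> b \<and> S = {a, b}" by auto
    then show ?thesis by (simp add: ggen_def inv_count_singletons)
  next
    case False
    then have "\<not> (a \<noteq> b \<and> S = {a, b})" by auto
    then show ?thesis using False by (auto simp: ggen_def)
  qed
  finally show ?thesis .
qed

lemma ggen_mul:
  "gmul (ggen a) (ggen b) = (\<lambda>S. if a \<noteq> b \<and> S = {a, b} then (if b < a then -1 else 1) else 0)"
proof
  fix S :: "'a set"
  show "gmul (ggen a) (ggen b) S = (if a \<noteq> b \<and> S = {a, b} then (if b < a then -1 else 1) else 0)"
  proof (cases "finite S")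
    case False
    then have "S \<noteq> {a, b}" by auto
    with False show ?thesis by (simp add: gmul_infinite)
  qed (rule ggen_mul_finite)
qed

lift_definition gen :: "'g \<Rightarrow> ('g::linorder) grassmann" is ggen
  by (auto simp: ggen_def)

lemma gen_anticommute: "gen a * gen b = - (gen b * gen a)"
  by transfer (auto simp: ggen_mul fun_eq_iff insert_commute)

lemma gen_square: "gen a * gen a = 0"
  by transfer (simp add: ggen_mul gzero_def)

lemma gen_pairs_swap: "gen a * gen b * (gen c * gen d) = - (gen a * gen d * (gen c * gen b))"
proof -
  have h1: "gen b * (gen c * gen d) = - (gen c * (gen b * gen d))"
    by (simp add: mult.assoc[symmetric] gen_anticommute[of b c])
  have h2: "gen b * gen d = - (gen d * gen b)" by (rule gen_anticommute)
  have h3: "gen c * (gen d * gen b) = - (gen d * (gen c * gen b))"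
    by (simp add: mult.assoc[symmetric] gen_anticommute[of c d])
  show ?thesis by (simp add: mult.assoc h1 h2 h3)
qed

lemma gen_pairs_same_first: "gen a * gen b * (gen a * gen d) = 0"
proof -
  have "gen a * gen b * (gen a * gen d) = gen a * (gen b * gen a) * gen d"
    by (simp only: mult.assoc)
  also have "\<dots> = - (gen a * gen a * gen b * gen d)"
    by (simp add: gen_anticommute[of b a] mult.assoc)
  finally show ?thesis by (simp add: gen_square)
qed

lemma gen_pairs_same_second: "gen a * gen b * (gen c * gen b) = 0"
proof -
  have "gen b * (gen c * gen b) = - (gen c * (gen b * gen b))"
    by (simp add: mult.assoc[symmetric] gen_anticommute[of b c])
  then show ?thesis by (simp add: mult.assoc gen_square)
qed

lemma has_parity_gen_pair: "has_parity 0 (Rep_grassmann (gen a * gen b))"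
  using has_parity_gmul[of 1 "ggen a" 1 "ggen b"]
  by (simp add: has_parity_def ggen_def times_grassmann.rep_eq gen.rep_eq)

definition psibar_psi :: "'v \<Rightarrow> 'v \<Rightarrow> ('v::linorder \<times> bool) even_grassmann" where
  "psibar_psi i j = Abs_even_grassmann (gen (i, False) * gen (j, True))"

lemma Rep_psibar_psi: "Rep_even_grassmann (psibar_psi i j) = gen (i, False) * gen (j, True)"
  unfolding psibar_psi_def by (simp add: Abs_even_grassmann_inverse has_parity_gen_pair)

lemma psibar_psi_swap: "psibar_psi i j * psibar_psi k l = - (psibar_psi i l * psibar_psi k j)"
  unfolding Rep_even_grassmann_inject[symmetric] times_even_grassmann.rep_eq
    uminus_even_grassmann.rep_eq Rep_psibar_psi
  by (rule gen_pairs_swap)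

lemma psibar_psi_same_row: "psibar_psi i j * psibar_psi i l = 0"
  by (simp add: Rep_even_grassmann_inject[symmetric] times_even_grassmann.rep_eq
      zero_even_grassmann.rep_eq Rep_psibar_psi gen_pairs_same_first)

lemma psibar_psi_same_column: "psibar_psi i j * psibar_psi k j = 0"
  by (simp add: Rep_even_grassmann_inject[symmetric] times_even_grassmann.rep_eq
      zero_even_grassmann.rep_eq Rep_psibar_psi gen_pairs_same_second)

section \<open>Rings generated by elements subject to the pair relations\<close>

lemma sum_insert_remove:
  assumes "finite C" "x \<notin> C"
  shows "(\<Sum>i\<in>insert x C. h (insert x C - {i})) = h C + (\<Sum>i\<in>C. h (insert x (C - {i})))"
proof -
  have "(\<Sum>i\<in>insert x C. h (insert x C - {i})) = h (insert x C - {x}) + (\<Sum>i\<in>C. h (insert x C - {i}))"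
    using assms by simp
  also have "insert x C - {x} = C" using assms by auto
  also have "(\<Sum>i\<in>C. h (insert x C - {i})) = (\<Sum>i\<in>C. h (insert x (C - {i})))"
    by (rule sum.cong) (use assms in \<open>auto simp: insert_Diff_if\<close>)
  finally show ?thesis .
qed

lemma sum_offdiag_insert:
  fixes g :: "'v \<Rightarrow> 'v \<Rightarrow> 'v set \<Rightarrow> 'r::comm_monoid_add"
  assumes "finite C" "x \<notin> C"
  shows "(\<Sum>i\<in>insert x C. \<Sum>j\<in>insert x C - {i}. g i j (insert x C - {i} - {j})) =
         (\<Sum>j\<in>C. g x j (C - {j})) + (\<Sum>i\<in>C. g i x (C - {i})) +
         (\<Sum>i\<in>C. \<Sum>j\<in>C - {i}. g i j (insert x (C - {i} - {j})))"
proof -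
  have inner: "(\<Sum>j\<in>insert x C - {i}. g i j (insert x C - {i} - {j})) =
      g i x (C - {i}) + (\<Sum>j\<in>C - {i}. g i j (insert x (C - {i} - {j})))" if i: "i \<in> C" for i
  proof -
    have "insert x C - {i} = insert x (C - {i})" using i assms by auto
    then have "(\<Sum>j\<in>insert x C - {i}. g i j (insert x C - {i} - {j})) =
        g i x (C - {i}) + (\<Sum>j\<in>C - {i}. g i j (insert x (C - {i}) - {j}))"
      using assms by simp
    also have "(\<Sum>j\<in>C - {i}. g i j (insert x (C - {i}) - {j})) =
        (\<Sum>j\<in>C - {i}. g i j (insert x (C - {i} - {j})))"
      by (rule sum.cong) (use assms in \<open>auto simp: insert_Diff_if\<close>)
    finally show ?thesis .
  qed
  have "insert x C - {x} = C" using assms by auto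
  then have "(\<Sum>i\<in>insert x C. \<Sum>j\<in>insert x C - {i}. g i j (insert x C - {i} - {j})) =
      (\<Sum>j\<in>C. g x j (C - {j})) + (\<Sum>i\<in>C. \<Sum>j\<in>insert x C - {i}. g i j (insert x C - {i} - {j}))"
    using assms by simp
  also have "\<dots> = (\<Sum>j\<in>C. g x j (C - {j})) +
      (\<Sum>i\<in>C. g i x (C - {i}) + (\<Sum>j\<in>C - {i}. g i j (insert x (C - {i} - {j}))))"
    using inner by simp
  finally show ?thesis by (simp add: sum.distrib add.assoc)
qed

locale pair_relations =
  fixes M :: "'v \<Rightarrow> 'v \<Rightarrow> 'r::comm_ring_1"
  assumes swap: "M i j * M k l = - (M i l * M k j)"
    and same_row: "M i j * M i l = 0"
    and same_column: "M i j * M k j = 0"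
begin

definition diag :: "'v set \<Rightarrow> 'r" where
  "diag A = (\<Prod>i\<in>A. M i i)"

definition f0 :: "'v set \<Rightarrow> 'r" where
  "f0 A = (\<Sum>i\<in>A. diag (A - {i})) - (\<Sum>i\<in>A. \<Sum>j\<in>A - {i}. M i j * diag (A - {i} - {j}))"

text \<open>For \<open>M i j\<close> $= \bar\psi_i\psi_j$ this is $(\bar\psi_j - \bar\psi_r)(\psi_j - \psi_r)$.\<close>
definition diff_pair :: "'v \<Rightarrow> 'v \<Rightarrow> 'r" where
  "diff_pair r j = M j j - M j r - M r j + M r r"

definition cross :: "'v \<Rightarrow> 'v set \<Rightarrow> 'r" where
  "cross r B = (\<Sum>k\<in>B. (M k r + M r k) * diag (B - {k}))"

lemma diag_insert: "finite C \<Longrightarrow> a \<notin> C \<Longrightarrow> diag (insert a C) = M a a * diag C"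
  unfolding diag_def by simp

lemma diag_Un: "finite X \<Longrightarrow> finite Y \<Longrightarrow> X \<inter> Y = {} \<Longrightarrow> diag X * diag Y = diag (X \<union> Y)"
  unfolding diag_def by (simp add: prod.union_disjoint)

lemma diag_remove: "finite X \<Longrightarrow> v \<in> X \<Longrightarrow> diag X = M v v * diag (X - {v})"
  using diag_insert[of "X - {v}" v] by (simp add: insert_absorb)

lemma diag_mult_overlap:
  assumes "finite X" "finite Y" "v \<in> X" "v \<in> Y"
  shows "diag X * diag Y = 0"
proof -
  have "diag X * diag Y = (M v v * M v v) * (diag (X - {v}) * diag (Y - {v}))"
    using assms by (simp add: diag_remove[of X v] diag_remove[of Y v] ac_simps)
  then show ?thesis by (simp add: same_row)
qed

lemma diag_mult_diff_pair: "M r r * diff_pair r x = M r r * M x x"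
  unfolding diff_pair_def by (simp add: algebra_simps same_row same_column)

lemma cross_term_mult_diff_pair:
  "(M k r + M r k) * diff_pair r x = (M k r + M r k) * M x x + (M k x + M x k) * M r r"
proof -
  have a: "M r k * M x r = - (M r r * M x k)" by (rule swap)
  have b: "M k r * M r x = - (M k x * M r r)" by (rule swap)
  show ?thesis unfolding diff_pair_def by (simp add: algebra_simps same_row same_column a b)
qed

lemma cross_mult_diff_pair: "cross r B * diff_pair r x = M x x * cross r B + M r r * cross x B"
proof -
  have "cross r B * diff_pair r x = (\<Sum>k\<in>B. ((M k r + M r k) * diff_pair r x) * diag (B - {k}))"
    unfolding cross_def sum_distrib_right by (simp add: ac_simps)
  also have "\<dots> = (\<Sum>k\<in>B. ((M k r + M r k) * M x x + (M k x + M x k) * M r r) * diag (B - {k}))"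
    by (simp only: cross_term_mult_diff_pair)
  also have "\<dots> = M x x * cross r B + M r r * cross x B"
    unfolding cross_def by (simp add: sum_distrib_left sum.distrib algebra_simps)
  finally show ?thesis .
qed

lemma cross_insert:
  assumes "finite B" "x \<notin> B"
  shows "cross r (insert x B) = (M x r + M r x) * diag B + M x x * cross r B"
proof -
  have "diag (insert x B - {k}) = M x x * diag (B - {k})" if "k \<in> B" for k
  proof -
    have "insert x B - {k} = insert x (B - {k})" using that assms by auto
    then show ?thesis using assms by (simp add: diag_insert)
  qed
  moreover have "insert x B - {x} = B" using assms by auto
  ultimately show ?thesis
    using assms unfolding cross_def by (simp add: sum_distrib_left algebra_simps)
qed

lemma f0_insert:
  assumes "finite B" "r \<notin> B"
  shows "f0 (insert r B) = diag B + M r r * f0 B - cross r B"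
proof -
  have "(\<Sum>i\<in>insert r B. diag (insert r B - {i})) = diag B + (\<Sum>k\<in>B. M r r * diag (B - {k}))"
    using assms by (subst sum_insert_remove) (simp_all add: diag_insert)
  moreover have "(\<Sum>i\<in>insert r B. \<Sum>j\<in>insert r B - {i}. M i j * diag (insert r B - {i} - {j})) =
      (\<Sum>j\<in>B. M r j * diag (B - {j})) + (\<Sum>i\<in>B. M i r * diag (B - {i})) +
      (\<Sum>i\<in>B. \<Sum>j\<in>B - {i}. M i j * (M r r * diag (B - {i} - {j})))"
    using sum_offdiag_insert[OF assms, of "\<lambda>i j S. M i j * diag S"] assms by (simp add: diag_insert)
  ultimately show ?thesis
    unfolding f0_def cross_def by (simp add: algebra_simps sum.distrib sum_distrib_left)
qed

lemma f0_insert_insert: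
  assumes "finite B" "r \<notin> B" "x \<notin> B" "x \<noteq> r"
  shows "f0 (insert r (insert x B)) = f0 (insert r B) * diff_pair r x"
proof -
  have "f0 (insert r (insert x B)) =
      M x x * diag B + M r r * (diag B + M x x * f0 B - cross x B)
      - ((M x r + M r x) * diag B + M x x * cross r B)"
    using assms by (simp add: f0_insert cross_insert diag_insert)
  also have "\<dots> = diag B * diff_pair r x + f0 B * (M r r * diff_pair r x) - cross r B * diff_pair r x"
    unfolding diag_mult_diff_pair cross_mult_diff_pair by (simp add: diff_pair_def algebra_simps)
  also have "\<dots> = f0 (insert r B) * diff_pair r x"
    using assms by (simp add: f0_insert algebra_simps)
  finally show ?thesis .
qed

lemma f0_eq_prod_diff_pair:
  assumes "finite A" "r \<in> A"
  shows "f0 A = (\<Prod>j\<in>A - {r}. diff_pair r j)"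
proof -
  have "f0 (insert r B) = (\<Prod>j\<in>B. diff_pair r j)" if "finite B" "r \<notin> B" for B
    using that
  proof (induction B rule: finite_induct)
    case empty
    then show ?case by (simp add: f0_insert diag_def f0_def cross_def)
  next
    case (insert x B)
    then show ?case using f0_insert_insert[of B r x] by (auto simp: mult.commute)
  qed
  moreover have "A = insert r (A - {r})" using assms by auto
  ultimately show ?thesis using assms by (metis finite_Diff Diff_idemp Diff_iff insertI1)
qed

lemma diff_pair_square: "diff_pair v u * diff_pair v u = 0"
proof -
  have "M u v * M v u = - (M u u * M v v)" "M v u * M u v = - (M v v * M u u)"
    by (rule swap)+
  then show ?thesis unfolding diff_pair_def by (simp add: algebra_simps same_row same_column)
qed

lemma diag_mult_prod_diff_pair:
  assumes "finite X" "v \<in> X" "finite C"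
  shows "diag X * (\<Prod>j\<in>C. diff_pair v j) = diag X * diag C"
  using assms(3)
proof (induction C rule: finite_induct)
  case empty
  then show ?case by (simp add: diag_def)
next
  case (insert c C)
  have "diag X * (\<Prod>j\<in>insert c C. diff_pair v j) = diag X * (\<Prod>j\<in>C. diff_pair v j) * diff_pair v c"
    using insert.hyps by (simp add: ac_simps)
  also have "\<dots> = diag C * diag (X - {v}) * (M v v * diff_pair v c)"
    using insert.IH assms(1,2) by (simp add: diag_remove[of X v] ac_simps)
  also have "\<dots> = diag X * diag (insert c C)"
    using insert.hyps assms(1,2) by (simp add: diag_mult_diff_pair diag_insert diag_remove[of X v] ac_simps)
  finally show ?case .
qed

lemma diag_mult_f0:
  assumes "finite X" "finite Y" "v \<in> X" "v \<in> Y"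
  shows "diag X * f0 Y = diag X * diag (Y - {v})"
  using assms by (simp add: f0_eq_prod_diff_pair[of Y v] diag_mult_prod_diff_pair)

text \<open>$f^{(\lambda)}_A$ corresponds to \<open>fw (\<lambda> * (1 - card A)) A\<close>.\<close>
definition fw :: "'r \<Rightarrow> 'v set \<Rightarrow> 'r" where
  "fw w A = w * diag A + f0 A"

lemma fw_mult:
  "fw c X * fw d Y = f0 X * f0 Y + d * (diag Y * f0 X) + c * (diag X * f0 Y) + c * d * (diag X * diag Y)"
  unfolding fw_def by (simp add: ring_distribs mult_ac add_ac)

lemma fw_mult_one_common:
  assumes "finite X" "finite Y" "X \<inter> Y = {v}"
  shows "fw c X * fw d Y = fw (c + d) (X \<union> Y)"
proof -
  have v: "v \<in> X" "v \<in> Y" using assms by auto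
  have disj: "(X - {v}) \<inter> (Y - {v}) = {}" using assms by auto
  have "f0 X * f0 Y = f0 (X \<union> Y)"
  proof -
    have "(X - {v}) \<union> (Y - {v}) = X \<union> Y - {v}" by auto
    then show ?thesis
      using assms v disj by (simp add: f0_eq_prod_diff_pair[of _ v] prod.union_disjoint[symmetric])
  qed
  moreover have "diag X' * f0 Y' = diag (X' \<union> Y')"
    if "finite X'" "finite Y'" "X' \<inter> Y' = {v}" for X' Y'
  proof -
    have "v \<in> X'" "v \<in> Y'" "X' \<inter> (Y' - {v}) = {}" using that by auto
    then have "diag X' * f0 Y' = diag (X' \<union> (Y' - {v}))"
      using that by (simp add: diag_mult_f0[of _ _ v] diag_Un)
    also have "X' \<union> (Y' - {v}) = X' \<union> Y'" using that by auto
    finally show ?thesis .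
  qed
  then have "diag X * f0 Y = diag (X \<union> Y)" "diag Y * f0 X = diag (X \<union> Y)"
    using assms by (auto simp: Int_commute Un_commute)
  moreover have "diag X * diag Y = 0" using assms v by (intro diag_mult_overlap) auto
  ultimately show ?thesis unfolding fw_mult by (simp add: fw_def algebra_simps)
qed

lemma fw_mult_two_common:
  assumes "finite X" "finite Y" "u \<in> X \<inter> Y" "v \<in> X \<inter> Y" "u \<noteq> v"
  shows "fw c X * fw d Y = 0"
proof -
  have "(\<Prod>j\<in>Z - {v}. diff_pair v j) = diff_pair v u * (\<Prod>j\<in>Z - {v} - {u}. diff_pair v j)"
    if "finite Z" "u \<in> Z" for Z
    using that assms prod.remove[of "Z - {v}" u "diff_pair v"] by auto
  then have "f0 X * f0 Y = (diff_pair v u * diff_pair v u) *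
      ((\<Prod>j\<in>X - {v} - {u}. diff_pair v j) * (\<Prod>j\<in>Y - {v} - {u}. diff_pair v j))"
    using assms by (simp add: f0_eq_prod_diff_pair[of _ v] ac_simps)
  then have "f0 X * f0 Y = 0" by (simp add: diff_pair_square)
  moreover have "diag X * f0 Y = 0" "diag Y * f0 X = 0"
    using assms by (simp_all add: diag_mult_f0[of _ _ v] diag_mult_overlap[of _ _ u])
  moreover have "diag X * diag Y = 0" using assms by (intro diag_mult_overlap) auto
  ultimately show ?thesis unfolding fw_mult by simp
qed

end

section \<open>Walks, paths and cycles\<close>

lemma hg_walk_length: "hg_walk F vs es \<Longrightarrow> length vs = Suc (length es)"
  by (simp add: hg_walk_def)

lemma hg_walk_nonempty: "hg_walk F vs es \<Longrightarrow> vs \<noteq> []"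
  by (auto simp: hg_walk_def)

lemma hg_walk_mono: "hg_walk F vs es \<Longrightarrow> F \<subseteq> F' \<Longrightarrow> hg_walk F' vs es"
  by (auto simp: hg_walk_def)

lemma hg_walk_edges_subset: "hg_walk F vs es \<Longrightarrow> set es \<subseteq> F"
  by (auto simp: hg_walk_def in_set_conv_nth)

lemma hg_walk_vertex_in_edge:
  assumes "hg_walk F vs es" "es \<noteq> []" "v \<in> set vs"
  shows "\<exists>e\<in>set es. v \<in> e"
proof -
  obtain i where i: "i < length vs" "vs ! i = v" using assms(3) by (auto simp: in_set_conv_nth)
  have len: "length vs = Suc (length es)" using assms(1) by (rule hg_walk_length)
  show ?thesis
  proof (cases "i < length es")
    case True
    then show ?thesis using assms(1) i by (auto simp: hg_walk_def intro!: bexI[of _ "es ! i"])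
  next
    case False
    then have "i = Suc (length es - 1)" "length es - 1 < length es" using i len assms(2) by auto
    then show ?thesis using assms(1) i by (auto simp: hg_walk_def intro!: bexI[of _ "es ! (length es - 1)"])
  qed
qed

lemma hg_walk_snoc:
  assumes "hg_walk F vs es" "A \<in> F" "last vs \<in> A" "y \<in> A"
  shows "hg_walk F (vs @ [y]) (es @ [A])"
proof -
  have len: "length vs = Suc (length es)" using assms(1) by (rule hg_walk_length)
  then have "vs ! length es = last vs" by (simp add: last_conv_nth hg_walk_nonempty[OF assms(1)])
  then show ?thesis
    using assms len unfolding hg_walk_def by (auto simp: nth_append less_Suc_eq)
qed

lemma hg_walk_rev:
  assumes "hg_walk F vs es"
  shows "hg_walk F (rev vs) (rev es)"
proof -
  have len: "length vs = Suc (length es)" using assms by (rule hg_walk_length)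
  have "rev es ! i \<in> F \<and> rev vs ! i \<in> rev es ! i \<and> rev vs ! Suc i \<in> rev es ! i"
    if i: "i < length es" for i
  proof -
    define j where "j = length es - Suc i"
    have "rev es ! i = es ! j" "rev vs ! i = vs ! Suc j" "rev vs ! Suc i = vs ! j"
      using i len by (simp_all add: rev_nth j_def Suc_diff_Suc)
    moreover have "j < length es" using i by (simp add: j_def)
    ultimately show ?thesis using assms unfolding hg_walk_def by simp
  qed
  then show ?thesis using len unfolding hg_walk_def by simp
qed

lemma list_crossing:
  assumes "xs \<noteq> []" "P (hd xs)" "\<not> P (last xs)"
  shows "\<exists>i. Suc i < length xs \<and> P (xs ! i) \<and> \<not> P (xs ! Suc i)"
  using assms
proof (induction xs)
  case (Cons a xs)
  show ?case
  proof (cases "xs = [] \<or> \<not> P (hd xs)")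
    case True
    then show ?thesis using Cons.prems by (cases xs) (auto intro!: exI[of _ 0])
  next
    case False
    then obtain i where "Suc i < length xs" "P (xs ! i)" "\<not> P (xs ! Suc i)"
      using Cons by auto
    then show ?thesis by (intro exI[of _ "Suc i"]) auto
  qed
qed simp

definition hg_path :: "'v set set \<Rightarrow> 'v \<Rightarrow> 'v \<Rightarrow> 'v list \<Rightarrow> 'v set list \<Rightarrow> bool" where
  "hg_path F x y vs es \<longleftrightarrow>
     hg_walk F vs es \<and> hd vs = x \<and> last vs = y \<and> distinct vs \<and> distinct es \<and> es \<noteq> []"

lemma hg_path_edge: "A \<in> F \<Longrightarrow> x \<in> A \<Longrightarrow> y \<in> A \<Longrightarrow> x \<noteq> y \<Longrightarrow> hg_path F x y [x, y] [A]"
  by (auto simp: hg_path_def hg_walk_def)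

lemma hg_path_mono: "hg_path F x y vs es \<Longrightarrow> F \<subseteq> F' \<Longrightarrow> hg_path F' x y vs es"
  by (auto simp: hg_path_def intro: hg_walk_mono)

lemma hg_path_sym: "hg_path F x y vs es \<Longrightarrow> hg_path F y x (rev vs) (rev es)"
  by (auto simp: hg_path_def hd_rev last_rev hg_walk_rev)

lemma hg_path_snoc:
  assumes "hg_path F x c vs es" "c \<in> A" "y \<in> A" "y \<notin> \<Union>(set es)" "A \<notin> set es"
  shows "hg_path (insert A F) x y (vs @ [y]) (es @ [A])"
proof -
  have walk: "hg_walk F vs es" and ne: "es \<noteq> []" using assms(1) by (auto simp: hg_path_def)
  have "y \<notin> set vs" using hg_walk_vertex_in_edge[OF walk ne] assms(4) by blast
  then show ?thesis
    using assms hg_walk_snoc[OF hg_walk_mono[OF walk, of "insert A F"], of A y]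
    by (auto simp: hg_path_def hg_walk_nonempty)
qed

lemma hg_paths_glue_edge:
  assumes paths: "\<And>x y. x \<in> \<Union>F \<Longrightarrow> y \<in> \<Union>F \<Longrightarrow> x \<noteq> y \<Longrightarrow> \<exists>vs es. hg_path F x y vs es"
    and c: "A \<inter> \<Union>F = {c}" and A: "A \<notin> F"
    and xy: "x \<in> \<Union>(insert A F)" "y \<in> \<Union>(insert A F)" "x \<noteq> y"
  shows "\<exists>vs es. hg_path (insert A F) x y vs es"
proof -
  have into_A: "\<exists>vs es. hg_path (insert A F) x y vs es"
    if x: "x \<in> \<Union>F" and y: "y \<in> A" "y \<notin> \<Union>F" for x y
  proof (cases "x \<in> A")
    case True
    then show ?thesis using hg_path_edge[of A "insert A F" x y] x y by auto
  next
    case False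
    moreover have "c \<in> A" "c \<in> \<Union>F" using c by auto
    ultimately obtain vs es where p: "hg_path F x c vs es" using paths[of x c] x by auto
    then have "set es \<subseteq> F" by (auto simp: hg_path_def dest: hg_walk_edges_subset)
    then have "y \<notin> \<Union>(set es)" "A \<notin> set es" using y(2) A by auto
    then show ?thesis using hg_path_snoc[OF p \<open>c \<in> A\<close> y(1)] by blast
  qed
  from xy consider "x \<in> A" "y \<in> A" | "x \<in> \<Union>F" "y \<in> \<Union>F" | "x \<in> \<Union>F" "y \<in> A - \<Union>F"
    | "y \<in> \<Union>F" "x \<in> A - \<Union>F" by blast
  then show ?thesis
  proof cases
    case 1
    then show ?thesis using hg_path_edge[of A "insert A F" x y] xy(3) by auto
  next
    case 2
    then show ?thesis using paths[of x y] xy(3) by (auto intro: hg_path_mono)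
  next
    case 3
    then show ?thesis using into_A by blast
  next
    case 4
    then show ?thesis using into_A[of y x] by (blast dest: hg_path_sym)
  qed
qed

lemma hg_path_close_cycle:
  assumes "hg_path F x y vs es" "x \<in> A" "y \<in> A" "A \<notin> set es"
  shows "hg_cycle (insert A F) (vs @ [x]) (es @ [A])"
proof -
  have walk: "hg_walk F vs es" using assms(1) by (simp add: hg_path_def)
  have "hg_walk (insert A F) (vs @ [x]) (es @ [A])"
    using assms by (intro hg_walk_snoc hg_walk_mono[OF walk]) (auto simp: hg_path_def)
  moreover have "2 \<le> length (es @ [A])" using assms(1) by (cases es) (auto simp: hg_path_def)
  ultimately show ?thesis
    using assms hg_walk_nonempty[OF walk] by (auto simp: hg_cycle_def hg_path_def)
qed

lemma two_elements_if_card_ne_1: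
  assumes "X \<noteq> {}" "card X \<noteq> 1"
  obtains x y where "x \<in> X" "y \<in> X" "x \<noteq> y"
proof -
  obtain x where "x \<in> X" using assms(1) by blast
  moreover have "X \<noteq> {x}" using assms(2) by auto
  ultimately show ?thesis using that by blast
qed

lemma hg_cycle_edge_endpoints:
  assumes cycle: "hg_cycle F vs es" and i: "i < length es"
  shows "vs ! i \<noteq> vs ! Suc i" "\<exists>e\<in>set es - {es ! i}. vs ! i \<in> e"
    "\<exists>e\<in>set es - {es ! i}. vs ! Suc i \<in> e"
proof -
  define m where "m = length es"
  have walk: "hg_walk F vs es" and m2: "2 \<le> m" and dist: "distinct (butlast vs)" "distinct es"
    and closed: "last vs = hd vs"
    using cycle by (auto simp: hg_cycle_def m_def)
  have len: "length vs = Suc m" using hg_walk_length[OF walk] by (simp add: m_def)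
  have edge: "es ! j \<in> set es \<and> vs ! j \<in> es ! j \<and> vs ! Suc j \<in> es ! j" if "j < m" for j
    using walk that by (simp add: hg_walk_def m_def)
  have wrap: "vs ! m = vs ! 0"
    using closed len by (metis hd_conv_nth last_conv_nth hg_walk_nonempty[OF walk] diff_Suc_1)
  have vs_inj: "j = j'" if "j < m" "j' < m" "vs ! j = vs ! j'" for j j'
    using dist(1) that len by (simp add: nth_butlast[symmetric] nth_eq_iff_index_eq)
  have es_ne: "es ! j \<noteq> es ! j'" if "j < m" "j' < m" "j \<noteq> j'" for j j'
    using dist(2) that by (simp add: nth_eq_iff_index_eq m_def)
  have im: "i < m" using i by (simp add: m_def)
  show "vs ! i \<noteq> vs ! Suc i"
  proof (cases "Suc i < m")
    case False
    then have "Suc i = m" "i \<noteq> 0" using im m2 by auto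
    then show ?thesis using vs_inj[of i 0] wrap im by auto
  qed (use vs_inj[of i "Suc i"] im in auto)
  show "\<exists>e\<in>set es - {es ! i}. vs ! i \<in> e"
  proof (cases i)
    case 0
    then have "vs ! i \<in> es ! (m - 1)" "es ! (m - 1) \<noteq> es ! i"
      using edge[of "m - 1"] es_ne[of "m - 1" i] wrap m2 by auto
    then show ?thesis using edge[of "m - 1"] m2 by auto
  next
    case (Suc j)
    then show ?thesis using edge[of j] es_ne[of j i] im by auto
  qed
  show "\<exists>e\<in>set es - {es ! i}. vs ! Suc i \<in> e"
  proof (cases "Suc i < m")
    case True
    then show ?thesis using edge[of "Suc i"] es_ne[of "Suc i" i] by auto
  next
    case False
    then have "Suc i = m" "i \<noteq> 0" using im m2 by auto
    then show ?thesis using edge[of 0] es_ne[of 0 i] wrap im by auto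
  qed
qed

section \<open>Edge orderings of connected hypergraphs\<close>

lemma hypergraph_edge:
  assumes "hypergraph V E" "A \<in> E"
  shows "A \<subseteq> V" "finite A" "2 \<le> card A"
  using assms card.infinite by (fastforce simp: hypergraph_def)+

lemma hypergraph_finite_edges: "hypergraph V E \<Longrightarrow> finite E"
  unfolding hypergraph_def by (meson Pow_iff finite_Pow_iff finite_subset subsetI)

definition prefixwise :: "('a \<Rightarrow> 'a list \<Rightarrow> bool) \<Rightarrow> 'a list \<Rightarrow> bool" where
  "prefixwise Q xs \<longleftrightarrow> (\<forall>k. 0 < k \<and> k < length xs \<longrightarrow> Q (xs ! k) (take k xs))"

lemma prefixwise_Nil [simp]: "prefixwise Q []"
  and prefixwise_single [simp]: "prefixwise Q [x]"
  by (simp_all add: prefixwise_def)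

lemma prefixwise_snoc [simp]:
  "prefixwise Q (xs @ [x]) \<longleftrightarrow> prefixwise Q xs \<and> (xs \<noteq> [] \<longrightarrow> Q x xs)"
proof -
  have "(\<forall>k. 0 < k \<and> k < Suc (length xs) \<longrightarrow> P k) \<longleftrightarrow>
      (\<forall>k. 0 < k \<and> k < length xs \<longrightarrow> P k) \<and> (xs \<noteq> [] \<longrightarrow> P (length xs))" for P
    by (auto simp: less_Suc_eq)
  then show ?thesis unfolding prefixwise_def by (simp add: nth_append)
qed

definition connected_order :: "'v set list \<Rightarrow> bool" where
  "connected_order os \<longleftrightarrow> distinct os \<and> prefixwise (\<lambda>A ps. A \<inter> \<Union>(set ps) \<noteq> {}) os"

definition tree_order :: "'v set list \<Rightarrow> bool" where
  "tree_order os \<longleftrightarrow> prefixwise (\<lambda>A ps. card (A \<inter> \<Union>(set ps)) = 1) os"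

lemma connected_order_snoc:
  "connected_order (ps @ [A]) \<longleftrightarrow>
     connected_order ps \<and> A \<notin> set ps \<and> (ps \<noteq> [] \<longrightarrow> A \<inter> \<Union>(set ps) \<noteq> {})"
  by (auto simp: connected_order_def)

lemma tree_order_snoc:
  "tree_order (ps @ [A]) \<longleftrightarrow> tree_order ps \<and> (ps \<noteq> [] \<longrightarrow> card (A \<inter> \<Union>(set ps)) = 1)"
  by (simp add: tree_order_def)

lemma connected_order_single: "connected_order [A]"
  and tree_order_single: "tree_order [A]"
  by (simp_all add: connected_order_def tree_order_def)

lemma connected_order_extend:
  assumes hg: "hypergraph V E" and con: "hg_connected V E"
    and ps: "set ps \<subseteq> E" "ps \<noteq> []" "set ps \<noteq> E"
  obtains A where "A \<in> E - set ps" "A \<inter> \<Union>(set ps) \<noteq> {}"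
proof -
  let ?U = "\<Union>(set ps)"
  obtain B where B: "B \<in> E" "B \<notin> set ps" using ps by auto
  obtain C where C: "C \<in> set ps" using ps(2) by (cases ps) auto
  obtain w u where wu: "w \<in> B" "u \<in> C"
    using hypergraph_edge(3)[OF hg B(1)] hypergraph_edge(3)[OF hg, of C] C ps(1)
    by (metis card.empty ex_in_conv not_numeral_le_zero subsetD)
  then have V: "w \<in> V" "u \<in> V"
    using hypergraph_edge(1)[OF hg B(1)] hypergraph_edge(1)[OF hg, of C] C ps(1) by auto
  show ?thesis
  proof (cases "w \<in> ?U")
    case True
    then show ?thesis using that B wu by blast
  next
    case False
    obtain vs es where walk: "hg_walk E vs es" "hd vs = u" "last vs = w"
      using con V unfolding hg_connected_def by blast
    obtain i where i: "Suc i < length vs" "vs ! i \<in> ?U" "vs ! Suc i \<notin> ?U"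
      using list_crossing[of vs "\<lambda>x. x \<in> ?U"] hg_walk_nonempty[OF walk(1)] walk wu C False by auto
    then have "es ! i \<in> E" "vs ! i \<in> es ! i" "vs ! Suc i \<in> es ! i"
      using walk(1) hg_walk_length[OF walk(1)] unfolding hg_walk_def by auto
    then show ?thesis using that i by blast
  qed
qed

lemma connected_order_exists:
  assumes hg: "hypergraph V E" and con: "hg_connected V E" and ne: "E \<noteq> {}"
  obtains os where "connected_order os" "set os = E"
proof -
  have "\<exists>ps. connected_order ps \<and> set ps \<subseteq> E \<and> length ps = Suc n" if "Suc n \<le> card E" for n
    using that
  proof (induction n)
    case 0
    obtain A where "A \<in> E" using ne by auto
    then show ?case by (intro exI[of _ "[A]"]) (simp add: connected_order_single)
  next
    case (Suc n)
    then obtain ps where ps: "connected_order ps" "set ps \<subseteq> E" "length ps = Suc n" by auto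
    then have "card (set ps) = Suc n" by (simp add: connected_order_def distinct_card)
    then have "set ps \<noteq> E" "ps \<noteq> []" using Suc.prems ps(3) by auto
    then obtain A where "A \<in> E - set ps" "A \<inter> \<Union>(set ps) \<noteq> {}"
      using connected_order_extend[OF hg con ps(2)] by blast
    then show ?case using ps by (intro exI[of _ "ps @ [A]"]) (simp add: connected_order_snoc)
  qed
  moreover have fin: "finite E" using hg by (rule hypergraph_finite_edges)
  then have "Suc (card E - 1) = card E" using ne by (simp add: card_gt_0_iff)
  ultimately obtain ps where ps: "connected_order ps" "set ps \<subseteq> E" "length ps = card E"
    by (metis order_refl)
  then have "card (set ps) = card E" by (simp add: connected_order_def distinct_card)
  then have "set ps = E" using ps(2) fin by (simp add: card_subset_eq)
  then show ?thesis using that ps(1) by blast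
qed

lemma hg_connected_Union_edges:
  assumes hg: "hypergraph V E" and con: "hg_connected V E" and ne: "E \<noteq> {}"
  shows "\<Union>E = V"
proof
  show "\<Union>E \<subseteq> V" using hg by (auto simp: hypergraph_def)
  show "V \<subseteq> \<Union>E"
  proof
    fix v assume v: "v \<in> V"
    obtain B where B: "B \<in> E" using ne by auto
    obtain w where w: "w \<in> B"
      using hypergraph_edge(3)[OF hg B] by (metis card.empty ex_in_conv not_numeral_le_zero)
    obtain vs es where walk: "hg_walk E vs es" "hd vs = v" "last vs = w"
      using con v w hypergraph_edge(1)[OF hg B] unfolding hg_connected_def by blast
    show "v \<in> \<Union>E"
    proof (cases "es = []")
      case True
      then have "v = w" using walk hg_walk_length[OF walk(1)] by (cases vs) auto
      then show ?thesis using w B by auto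
    next
      case False
      have "v \<in> set vs" using walk(2) hg_walk_nonempty[OF walk(1)] by auto
      then obtain e where "e \<in> set es" "v \<in> e" using hg_walk_vertex_in_edge[OF walk(1) False] by blast
      then show ?thesis using hg_walk_edges_subset[OF walk(1)] by blast
    qed
  qed
qed

lemma hg_connected_no_edges:
  assumes con: "hg_connected V {}" and ne: "V \<noteq> {}"
  obtains v where "V = {v}"
proof -
  obtain v where v: "v \<in> V" using ne by blast
  have "u = v" if u: "u \<in> V" for u
  proof -
    obtain vs es where walk: "hg_walk {} vs es" "hd vs = u" "last vs = v"
      using con v u unfolding hg_connected_def by blast
    have "set es \<subseteq> {}" using walk(1) by (rule hg_walk_edges_subset)
    then have "length vs = Suc 0" using hg_walk_length[OF walk(1)] by simp
    then obtain z where "vs = [z]" by (auto simp: length_Suc_conv)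
    then show ?thesis using walk by simp
  qed
  then show ?thesis using that v by blast
qed

text \<open>The last edge of the order lying on a cycle would meet the earlier ones in both of its
  endpoints on the cycle.\<close>
lemma tree_order_no_cycle:
  assumes "tree_order os" "hg_cycle F vs es" "set es \<subseteq> set os"
  shows False
  using assms
proof (induction os rule: rev_induct)
  case Nil
  then show ?case by (auto simp: hg_cycle_def)
next
  case (snoc A ps)
  show ?case
  proof (cases "A \<in> set es")
    case False
    then show ?thesis using snoc by (auto simp: tree_order_snoc)
  next
    case True
    then obtain i where i: "i < length es" "es ! i = A" by (auto simp: in_set_conv_nth)
    have others: "set es - {A} \<subseteq> set ps" using snoc.prems(3) by auto
    have "2 \<le> length es" "distinct es" using snoc.prems(2) by (auto simp: hg_cycle_def)
    have "ps \<noteq> []"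
    proof
      assume "ps = []"
      then have "card (set es) \<le> card {A}" using snoc.prems(3) by (intro card_mono) auto
      then show False using \<open>2 \<le> length es\<close> \<open>distinct es\<close> by (simp add: distinct_card)
    qed
    then have card: "card (A \<inter> \<Union>(set ps)) = 1" using snoc.prems(1) by (simp add: tree_order_snoc)
    let ?a = "vs ! i" and ?b = "vs ! Suc i"
    have "?a \<in> A" "?b \<in> A"
      using snoc.prems(2) i unfolding hg_cycle_def hg_walk_def by auto
    moreover have "?a \<in> \<Union>(set ps)" "?b \<in> \<Union>(set ps)"
      using hg_cycle_edge_endpoints(2,3)[OF snoc.prems(2) i(1)] i others by blast+
    ultimately have "{?a, ?b} \<subseteq> A \<inter> \<Union>(set ps)" by blast
    moreover have "?a \<noteq> ?b" using hg_cycle_edge_endpoints(1)[OF snoc.prems(2) i(1)] .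
    ultimately show False using card by (metis card_1_singletonE insert_subset singletonD)
  qed
qed

lemma tree_order_path:
  assumes "connected_order ps" "tree_order ps"
    and "x \<in> \<Union>(set ps)" "y \<in> \<Union>(set ps)" "x \<noteq> y"
  shows "\<exists>vs es. hg_path (set ps) x y vs es"
  using assms
proof (induction ps arbitrary: x y rule: rev_induct)
  case (snoc A ps)
  show ?case
  proof (cases "ps = []")
    case True
    then show ?thesis using snoc.prems hg_path_edge[of A "{A}" x y] by auto
  next
    case False
    have A: "A \<notin> set ps" "connected_order ps" using snoc.prems(1) by (simp_all add: connected_order_snoc)
    have "tree_order ps" "card (A \<inter> \<Union>(set ps)) = 1"
      using snoc.prems(2) False by (simp_all add: tree_order_snoc)
    then obtain c where c: "A \<inter> \<Union>(set ps) = {c}" by (auto simp: card_1_singleton_iff)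
    have "\<exists>vs es. hg_path (set ps) x y vs es"
      if "x \<in> \<Union>(set ps)" "y \<in> \<Union>(set ps)" "x \<noteq> y" for x y
      using snoc.IH[OF A(2) \<open>tree_order ps\<close> that] .
    then show ?thesis using hg_paths_glue_edge[of "set ps" A c x y] c A(1) snoc.prems(3-5) by simp
  qed
qed simp

lemma not_tree_order_cycle:
  assumes "connected_order os" "\<not> tree_order os"
  shows "\<exists>vs es. hg_cycle (set os) vs es"
  using assms
proof (induction os rule: rev_induct)
  case Nil
  then show ?case by (simp add: tree_order_def)
next
  case (snoc A ps)
  let ?U = "\<Union>(set ps)"
  have A: "A \<notin> set ps" "connected_order ps" using snoc.prems(1) by (simp_all add: connected_order_snoc)
  show ?case
  proof (cases "tree_order ps")
    case False
    then obtain vs es where "hg_cycle (set ps) vs es" using snoc.IH A(2) by blast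
    then have "hg_cycle (set (ps @ [A])) vs es" by (auto simp: hg_cycle_def intro: hg_walk_mono)
    then show ?thesis by blast
  next
    case True
    then have ne: "ps \<noteq> []" using snoc.prems(2) by (auto simp: tree_order_single)
    then have "A \<inter> ?U \<noteq> {}" "card (A \<inter> ?U) \<noteq> 1"
      using snoc.prems True by (auto simp: connected_order_snoc tree_order_snoc)
    then obtain x y where xy: "x \<in> A \<inter> ?U" "y \<in> A \<inter> ?U" "x \<noteq> y"
      by (rule two_elements_if_card_ne_1)
    then obtain vs es where p: "hg_path (set ps) x y vs es"
      using tree_order_path[OF A(2) True] by blast
    then have "A \<notin> set es" using A(1) by (auto simp: hg_path_def dest: hg_walk_edges_subset)
    then have "hg_cycle (insert A (set ps)) (vs @ [x]) (es @ [A])"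
      using hg_path_close_cycle[OF p] xy by blast
    then show ?thesis by auto
  qed
qed

lemma hypertree_iff_tree_order:
  assumes "hg_connected V E" "connected_order os" "set os = E"
  shows "hypertree V E \<longleftrightarrow> tree_order os"
proof
  assume "hypertree V E"
  then show "tree_order os"
    using not_tree_order_cycle[OF assms(2)] assms(3) by (auto simp: hypertree_def)
next
  assume "tree_order os"
  then show "hypertree V E"
    using tree_order_no_cycle assms hg_walk_edges_subset
    by (fastforce simp: hypertree_def hg_cycle_def)
qed

lemma tree_order_card_Union:
  assumes "connected_order ps" "tree_order ps" "ps \<noteq> []" "\<forall>A\<in>set ps. finite A \<and> A \<noteq> {}"
  shows "card (\<Union>(set ps)) = 1 + (\<Sum>A\<in>set ps. card A - 1)"
  using assms
proof (induction ps rule: rev_induct)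
  case (snoc A ps)
  let ?U = "\<Union>(set ps)"
  have A: "finite A" "A \<noteq> {}" "A \<notin> set ps" using snoc.prems(1,4) by (auto simp: connected_order_snoc)
  then have "card A \<ge> 1" by (simp add: Suc_le_eq card_gt_0_iff)
  show ?case
  proof (cases "ps = []")
    case True
    then show ?thesis using \<open>card A \<ge> 1\<close> by simp
  next
    case False
    have IH: "card ?U = 1 + (\<Sum>B\<in>set ps. card B - 1)"
      using snoc False by (simp add: connected_order_snoc tree_order_snoc)
    have "card (A \<inter> ?U) = 1" using snoc.prems(2) False by (simp add: tree_order_snoc)
    moreover have "finite ?U" using snoc.prems(4) by auto
    then have "card (A \<union> ?U) + card (A \<inter> ?U) = card A + card ?U"
      using card_Un_Int[OF A(1)] by simp
    ultimately show ?thesis using IH A \<open>card A \<ge> 1\<close> by (simp add: Un_commute)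
  qed
qed simp

lemma hypertree_no_edges: "hg_connected V {} \<Longrightarrow> hypertree V {}"
  by (auto simp: hypertree_def hg_cycle_def dest!: hg_walk_edges_subset)

lemma hypertree_card:
  assumes hg: "hypergraph V E" and con: "hg_connected V E" and "V \<noteq> {}" "hypertree V E"
  shows "card V = 1 + (\<Sum>A\<in>E. card A - 1)"
proof (cases "E = {}")
  case True
  then obtain v where "V = {v}" using hg_connected_no_edges con \<open>V \<noteq> {}\<close> by metis
  then show ?thesis using True by simp
next
  case False
  then obtain os where os: "connected_order os" "set os = E" using connected_order_exists[OF hg con] by blast
  have "tree_order os" using hypertree_iff_tree_order[OF con os] assms(4) by simp
  moreover have "\<forall>A\<in>set os. finite A \<and> A \<noteq> {}" using hypergraph_edge[OF hg] os(2) by fastforce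
  ultimately show ?thesis
    using tree_order_card_Union[OF os(1)] hg_connected_Union_edges[OF hg con False] os False by auto
qed

section \<open>Products over the edges of a connected hypergraph\<close>

context pair_relations
begin

lemma f0_singleton: "f0 {v} = 1"
  by (simp add: f0_def diag_def)

lemma prod_fw_connected_order:
  assumes "connected_order ps" "ps \<noteq> []" "\<forall>A\<in>set ps. finite A"
  shows "(\<Prod>A\<in>set ps. fw (w A) A) = (if tree_order ps then fw (\<Sum>A\<in>set ps. w A) (\<Union>(set ps)) else 0)"
  using assms
proof (induction ps rule: rev_induct)
  case (snoc A ps)
  let ?U = "\<Union>(set ps)"
  show ?case
  proof (cases "ps = []")
    case True
    then show ?thesis by (simp add: tree_order_single)
  next
    case False
    have A: "A \<notin> set ps" "A \<inter> ?U \<noteq> {}" "finite A" "finite ?U"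
      using snoc.prems False by (auto simp: connected_order_snoc)
    have IH: "(\<Prod>B\<in>set ps. fw (w B) B) = (if tree_order ps then fw (\<Sum>B\<in>set ps. w B) ?U else 0)"
      using snoc False by (simp add: connected_order_snoc)
    have prod: "(\<Prod>B\<in>set (ps @ [A]). fw (w B) B) = fw (w A) A * (\<Prod>B\<in>set ps. fw (w B) B)"
      and sum: "(\<Sum>B\<in>set (ps @ [A]). w B) = w A + (\<Sum>B\<in>set ps. w B)"
      using A(1) by simp_all
    show ?thesis
    proof (cases "tree_order ps \<and> card (A \<inter> ?U) = 1")
      case True
      then obtain v where "A \<inter> ?U = {v}" by (auto simp: card_Suc_eq)
      then show ?thesis
        using True False IH fw_mult_one_common[OF A(3,4)] unfolding prod sum
        by (simp add: tree_order_snoc)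
    next
      case not_tree: False
      moreover have "fw (w A) A * fw (\<Sum>B\<in>set ps. w B) ?U = 0" if card: "card (A \<inter> ?U) \<noteq> 1"
      proof -
        obtain x y where "x \<in> A \<inter> ?U" "y \<in> A \<inter> ?U" "x \<noteq> y"
          using two_elements_if_card_ne_1[OF A(2) card] .
        then show ?thesis by (rule fw_mult_two_common[OF A(3,4)])
      qed
      ultimately show ?thesis using IH False unfolding prod by (auto simp: tree_order_snoc)
    qed
  qed
qed simp

theorem prod_fw_hypergraph:
  assumes hg: "hypergraph V E" and con: "hg_connected V E" and "V \<noteq> {}"
  shows "(\<Prod>A\<in>E. fw (w A) A) = (if hypertree V E then fw (\<Sum>A\<in>E. w A) V else 0)"
proof (cases "E = {}")
  case True
  then obtain v where "V = {v}" using hg_connected_no_edges con \<open>V \<noteq> {}\<close> by metis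
  then show ?thesis using True hypertree_no_edges con by (simp add: fw_def f0_singleton)
next
  case False
  then obtain os where os: "connected_order os" "set os = E" using connected_order_exists[OF hg con] by blast
  moreover have "os \<noteq> []" "\<forall>A\<in>set os. finite A" using os False hypergraph_edge(2)[OF hg] by auto
  ultimately show ?thesis
    using prod_fw_connected_order[of os w] hypertree_iff_tree_order[OF con os]
      hg_connected_Union_edges[OF hg con False] by simp
qed

end

interpretation psibar_psi: pair_relations psibar_psi
  by unfold_locales (rule psibar_psi_swap psibar_psi_same_row psibar_psi_same_column)+

definition coeffs :: "('g::linorder) even_grassmann \<Rightarrow> 'g grass" where
  "coeffs x = Rep_grassmann (Rep_even_grassmann x)"

lemma coeffs_inject: "coeffs x = coeffs y \<longleftrightarrow> x = y"
  by (simp add: coeffs_def Rep_grassmann_inject Rep_even_grassmann_inject)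

lemma coeffs_infinite: "infinite S \<Longrightarrow> coeffs x S = 0"
  using Rep_grassmann[of "Rep_even_grassmann x"] by (simp add: coeffs_def)

lemma coeffs_mult: "coeffs (x * y) = gmul (coeffs x) (coeffs y)"
  and coeffs_add: "coeffs (x + y) = gadd (coeffs x) (coeffs y)"
  and coeffs_diff: "coeffs (x - y) = gdiff (coeffs x) (coeffs y)"
  and coeffs_zero: "coeffs 0 = gzero"
  and coeffs_one: "coeffs 1 = gone"
  by (simp_all add: coeffs_def times_even_grassmann.rep_eq times_grassmann.rep_eq
      plus_even_grassmann.rep_eq plus_grassmann.rep_eq minus_even_grassmann.rep_eq
      minus_grassmann.rep_eq zero_even_grassmann.rep_eq zero_grassmann.rep_eq
      one_even_grassmann.rep_eq one_grassmann.rep_eq)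

lemma coeffs_sum: "coeffs (sum f I) = gsum (\<lambda>i. coeffs (f i)) I"
proof (induction I rule: infinite_finite_induct)
  case (insert x F)
  then show ?case by (simp add: coeffs_add gsum_def gadd_def fun_eq_iff)
qed (simp_all add: coeffs_zero gsum_def gzero_def fun_eq_iff)

lemma gprod_list_map_coeffs: "gprod_list (map (\<lambda>a. coeffs (f a)) xs) = coeffs (prod_list (map f xs))"
  by (induction xs) (simp_all add: gprod_list_def coeffs_one coeffs_mult)

lemma coeffs_psibar_psi: "coeffs (psibar_psi i j) = gmul (psibar i) (psi j)"
  by (simp add: coeffs_def Rep_psibar_psi times_grassmann.rep_eq gen.rep_eq psibar_def psi_def)

lemma tau_eq_coeffs_diag: "tau A = coeffs (psibar_psi.diag A)"
proof (cases "finite A")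
  case True
  have "tau A = coeffs (prod_list (map (\<lambda>i. psibar_psi i i) (sorted_list_of_set A)))"
    unfolding tau_def by (simp add: coeffs_psibar_psi flip: gprod_list_map_coeffs)
  then show ?thesis
    using True prod.distinct_set_conv_list[of "sorted_list_of_set A" "\<lambda>i. psibar_psi i i"]
    by (simp add: psibar_psi.diag_def)
next
  case False
  then show ?thesis by (simp add: tau_def psibar_psi.diag_def gprod_list_def coeffs_one)
qed

definition scalar :: "complex \<Rightarrow> ('g::linorder) even_grassmann" where
  "scalar c = Abs_even_grassmann (Abs_grassmann (gscal c gone))"

lemma coeffs_scalar: "coeffs (scalar c) = gscal c gone"
proof -
  have g: "Rep_grassmann (Abs_grassmann (gscal c gone)) = gscal c gone"
    by (rule Abs_grassmann_inverse) (auto simp: gscal_def gone_def)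
  have e: "Rep_even_grassmann (Abs_even_grassmann (Abs_grassmann (gscal c gone))) = Abs_grassmann (gscal c gone)"
    by (rule Abs_even_grassmann_inverse) (unfold mem_Collect_eq g, auto simp: has_parity_def gscal_def gone_def)
  show ?thesis by (simp only: coeffs_def scalar_def e g)
qed

lemma coeffs_scalar_mult: "coeffs (scalar c * x) = gscal c (coeffs x)"
  by (simp add: coeffs_mult coeffs_scalar gmul_gscal_left gmul_gone_left coeffs_infinite)

lemma scalar_add: "scalar (a + b) = scalar a + scalar b"
  by (simp flip: coeffs_inject add: coeffs_add coeffs_scalar gadd_def gscal_def fun_eq_iff algebra_simps)

lemma scalar_zero: "scalar 0 = 0"
  by (simp flip: coeffs_inject add: coeffs_zero coeffs_scalar gscal_def gzero_def)

lemma scalar_sum: "scalar (sum f I) = (\<Sum>i\<in>I. scalar (f i))"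
  by (induction I rule: infinite_finite_induct) (simp_all add: scalar_zero scalar_add)

lemma fA_eq_coeffs_fw:
  assumes "finite A"
  shows "fA lam A = coeffs (psibar_psi.fw (scalar (lam * (1 - of_nat (card A)))) A)"
proof -
  let ?D = "{(i, j). i \<in> A \<and> j \<in> A \<and> i \<noteq> j}"
  have "(\<Sum>i\<in>A. \<Sum>j\<in>A - {i}. psibar_psi i j * psibar_psi.diag (A - {i} - {j})) =
      (\<Sum>(i, j)\<in>Sigma A (\<lambda>i. A - {i}). psibar_psi i j * psibar_psi.diag (A - {i} - {j}))"
    by (rule sum.Sigma) (use assms in auto)
  also have "\<dots> = (\<Sum>p\<in>?D. psibar_psi (fst p) (snd p) * psibar_psi.diag (A - {fst p, snd p}))"
    by (rule sum.cong) (auto simp: split_def Diff_insert2[symmetric] insert_commute)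
  finally have "coeffs (\<Sum>i\<in>A. \<Sum>j\<in>A - {i}. psibar_psi i j * psibar_psi.diag (A - {i} - {j})) =
      gsum (\<lambda>(i, j). gmul (gmul (psibar i) (psi j)) (tau (A - {i, j}))) ?D"
    by (simp add: coeffs_sum coeffs_mult coeffs_psibar_psi tau_eq_coeffs_diag split_def)
  then show ?thesis
    unfolding fA_def psibar_psi.fw_def psibar_psi.f0_def
    by (simp add: coeffs_add coeffs_diff coeffs_sum coeffs_scalar_mult tau_eq_coeffs_diag
        gadd_def gdiff_def fun_eq_iff)
qed

lemma hypergraph_sum_card_minus_one:
  assumes "hypergraph V E"
  shows "(\<Sum>A\<in>E. of_nat (card A) - (1::complex)) = of_nat (\<Sum>A\<in>E. card A - 1)"
proof -
  have "of_nat (card A - 1) = of_nat (card A) - (1::complex)" if "A \<in> E" for A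
    using hypergraph_edge(3)[OF assms that] by (simp add: of_nat_diff)
  then show ?thesis by (simp add: of_nat_sum)
qed

lemma hypertree_card_minus_one:
  assumes "hypergraph V E" "hg_connected V E" "V \<noteq> {}" "hypertree V E"
  shows "of_nat (card V) - 1 = (\<Sum>A\<in>E. of_nat (card A) - (1::complex))"
  using hypertree_card[OF assms] hypergraph_sum_card_minus_one[OF assms(1)] by simp

lemma lambda_star_mult_card:
  assumes "hypergraph V E" "hg_connected V E" "V \<noteq> {}" "hypertree V E"
  shows "lambda_star E lamA * (of_nat (card V) - 1) = (\<Sum>A\<in>E. (of_nat (card A) - 1) * lamA A)"
proof (cases "E = {}")
  case False
  then have "(\<Sum>A\<in>E. card A - 1) \<noteq> 0"
    using hypergraph_finite_edges[OF assms(1)] hypergraph_edge(3)[OF assms(1)] by fastforce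
  then have "(\<Sum>A\<in>E. of_nat (card A) - (1::complex)) \<noteq> 0"
    unfolding hypergraph_sum_card_minus_one[OF assms(1)] by (metis of_nat_eq_0_iff)
  then show ?thesis unfolding hypertree_card_minus_one[OF assms] lambda_star_def by simp
qed (simp add: lambda_star_def)

lemma lambda_star_const_mult_card:
  assumes "hypergraph V E" "hg_connected V E" "V \<noteq> {}" "hypertree V E"
  shows "lambda_star E (\<lambda>_. lam) * (of_nat (card V) - 1) = lam * (of_nat (card V) - 1)"
  using lambda_star_mult_card[OF assms, of "\<lambda>_. lam"]
  unfolding hypertree_card_minus_one[OF assms] by (simp add: sum_distrib_left mult.commute)

lemma fA_eqI:
  assumes "lam * (of_nat (card A) - 1) = mu * (of_nat (card A) - 1)"
  shows "fA lam A = fA mu A"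
proof -
  have "x * (1 - of_nat (card A)) = - (x * (of_nat (card A) - 1))" for x :: complex
    by (simp add: algebra_simps)
  then have "lam * (1 - of_nat (card A)) = mu * (1 - of_nat (card A))"
    using assms by (simp only:)
  then show ?thesis unfolding fA_def by (simp only:)
qed

lemma gprod_list_fA:
  assumes hg: "hypergraph V E" and con: "hg_connected V E" and "V \<noteq> {}"
    and es: "distinct es" "set es = E"
  shows "gprod_list (map (\<lambda>A. fA (lamA A) A) es) =
    (if hypertree V E then fA (lambda_star E lamA) V else gzero)"
proof -
  let ?f = "\<lambda>A. psibar_psi.fw (scalar (lamA A * (1 - of_nat (card A)))) A"
  have "gprod_list (map (\<lambda>A. fA (lamA A) A) es) = gprod_list (map (\<lambda>A. coeffs (?f A)) es)"
    using es(2) hypergraph_edge(2)[OF hg] by (auto simp: fA_eq_coeffs_fw intro!: arg_cong[where f = gprod_list])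
  also have "\<dots> = coeffs (prod_list (map ?f es))" by (rule gprod_list_map_coeffs)
  also have "prod_list (map ?f es) = (\<Prod>A\<in>E. ?f A)"
    using prod.distinct_set_conv_list[OF es(1), of ?f] es(2) by simp
  also have "coeffs \<dots> = (if hypertree V E
      then coeffs (psibar_psi.fw (scalar (\<Sum>A\<in>E. lamA A * (1 - of_nat (card A)))) V) else gzero)"
    using psibar_psi.prod_fw_hypergraph[OF assms(1-3)] by (simp add: scalar_sum coeffs_zero)
  also have "\<dots> = (if hypertree V E then fA (lambda_star E lamA) V else gzero)"
  proof (cases "hypertree V E")
    case True
    have "lambda_star E lamA * (1 - of_nat (card V)) = (\<Sum>A\<in>E. lamA A * (1 - of_nat (card A)))"
      using lambda_star_mult_card[OF assms(1-3) True] by (simp add: algebra_simps sum_subtractf sum_negf)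
    moreover have "finite V" using hg by (simp add: hypergraph_def)
    ultimately show ?thesis using True by (simp add: fA_eq_coeffs_fw)
  qed simp
  finally show ?thesis .
qed

theorem corollary4p3:
  fixes V :: "'v::linorder set" and E :: "'v set set"
  assumes "hypergraph V E" and "hg_connected V E" and "V \<noteq> {}"
  shows "(\<forall>(lam::complex) es. distinct es \<and> set es = E \<longrightarrow>
            gprod_list (map (fA lam) es) = (if hypertree V E then fA lam V else gzero))
       \<and> (\<forall>(lamA :: 'v set \<Rightarrow> complex) es. distinct es \<and> set es = E \<longrightarrow>
            gprod_list (map (\<lambda>A. fA (lamA A) A) es) =
              (if hypertree V E then fA (lambda_star E lamA) V else gzero))"
proof -
  have uniform: "fA (lambda_star E (\<lambda>_. lam)) V = fA lam V" if "hypertree V E" for lam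
    by (rule fA_eqI) (rule lambda_star_const_mult_card[OF assms that])
  show ?thesis using gprod_list_fA[OF assms] uniform by auto
qed

end
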